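(* Let $f$ be a harmonic function on $K$ whose restriction to the edge $[p_1,p_2]\cong[0,1]$ is strictly monotone. Then the derivative of this restriction at $t=\frac12$ exists in the extended sense and equals $+\infty$ if the restriction is increasing and $-\infty$ if it is decreasing.
   Context: Let $p_0,p_1,p_2$ be the vertices of a unit equilateral triangle in $\mathbb{R}^2$, $F_i(x)=(x+p_i)/2$, and $K$ the Sierpinski gasket (the attractor of $F_0,F_1,F_2$). Minimal triangles of the graph $G_m$ are the triangles with vertices $F_w(p_0),F_w(p_1),F_w(p_2)$ for words $w$ of length $m$. A continuous $f:K\to\mathbb{R}$ is harmonic if for every $m\ge0$ and every minimal triangle of $G_m$ with vertices $v_i,v_j,v_k$, the value at the midpoint $v_{ij}$ of $[v_i,v_j]$ is $\frac15(2f(v_i)+2f(v_j)+f(v_k))$. The edge $[p_1,p_2]$ is identified with $[0,1]$ via $t\mapsto p_1+t(p_2-p_1)$. *)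

theory Defs
  imports "HOL-Analysis.Analysis"
begin

text \<open>The plane R^2 is modelled by the complex numbers. The vertices are p 0, p 1, p 2.\<close>

definition sg_map :: "(nat \<Rightarrow> complex) \<Rightarrow> nat \<Rightarrow> complex \<Rightarrow> complex" where
  "sg_map p i x = (x + p i) / 2"

definition sg_word :: "(nat \<Rightarrow> complex) \<Rightarrow> nat list \<Rightarrow> complex \<Rightarrow> complex" where
  "sg_word p w x = foldr (sg_map p) w x"

definition sg_attractor :: "(nat \<Rightarrow> complex) \<Rightarrow> complex set" where
  "sg_attractor p = (THE K. compact K \<and> K \<noteq> {} \<and> K = (\<Union>i\<in>{0,1,2}. sg_map p i ` K))"

definition sg_harmonic :: "(nat \<Rightarrow> complex) \<Rightarrow> (complex \<Rightarrow> real) \<Rightarrow> bool" where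
  "sg_harmonic p f \<longleftrightarrow>
     continuous_on (sg_attractor p) f \<and>
     (\<forall>w. set w \<subseteq> {0,1,2} \<longrightarrow>
        (\<forall>i j k. {i,j,k} = {0,1,2::nat} \<longrightarrow>
           f ((sg_word p w (p i) + sg_word p w (p j)) / 2) =
             (2 * f (sg_word p w (p i)) + 2 * f (sg_word p w (p j)) + f (sg_word p w (p k))) / 5))"

definition sg_edge :: "(nat \<Rightarrow> complex) \<Rightarrow> (complex \<Rightarrow> real) \<Rightarrow> real \<Rightarrow> real" where
  "sg_edge p f t = f (p 1 + complex_of_real t * (p 2 - p 1))"

end

theory Submission
  imports Defs "HOL-Real_Asymp.Real_Asymp"
begin

text \<open>Let \<open>m\<close> be the midpoint of the edge and \<open>b, c\<close> the values of \<open>f\<close> at \<open>p 1, p 2\<close>.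
  The points \<open>F\<^sub>2 F\<^sub>1\<^sup>n (p 2)\<close> approach \<open>m\<close> along the edge from the right at distance
  \<open>2 ^ -(n + 1)\<close>, and they are vertices of the cells \<open>F\<^sub>2 F\<^sub>1\<^sup>n K\<close>, which all have \<open>m\<close> as a vertex.
  By the harmonic extension rule the values of \<open>f - f m\<close> at the other two vertices of these cells
  evolve by the matrix \<open>(1/5) [[2,1],[1,2]]\<close>, whose eigenvalues are \<open>3/5\<close> and \<open>1/5\<close>. The
  \<open>3/5\<close>-component of the edge increment is \<open>3 (c - b) / 10\<close>, nonzero for a strictly monotone
  restriction, so the dyadic difference quotients grow like \<open>(6/5)\<^sup>n\<close>; the same holds from the
  left, and monotonicity interpolates between dyadic points. The decreasing case follows by passing
  to \<open>-f\<close>.\<close>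

lemma coupled_recurrence_closed_form:
  fixes X Y :: "nat \<Rightarrow> real"
  assumes X: "\<And>n. X (Suc n) = (2 * X n + Y n) / 5"
    and Y: "\<And>n. Y (Suc n) = (2 * Y n + X n) / 5"
  shows "X n = ((X 0 + Y 0) * (3/5) ^ n + (X 0 - Y 0) * (1/5) ^ n) / 2"
proof -
  have "X n + Y n = (X 0 + Y 0) * (3/5) ^ n \<and> X n - Y n = (X 0 - Y 0) * (1/5) ^ n"
    by (induction n) (simp_all add: X Y field_simps)
  then have sum: "X n + Y n = (X 0 + Y 0) * (3/5) ^ n" and diff: "X n - Y n = (X 0 - Y 0) * (1/5) ^ n"
    by auto
  have "X n = ((X n + Y n) + (X n - Y n)) / 2"
    by simp
  then show ?thesis
    unfolding sum diff .
qed

lemma dyadic_power_growth: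
  fixes \<alpha> \<beta> :: real
  assumes "0 < \<alpha>"
  shows "filterlim (\<lambda>n. 2 ^ n * (\<alpha> * (3/5) ^ n + \<beta> * (1/5) ^ n)) at_top sequentially"
proof -
  have "(\<lambda>n. 2 ^ n * (\<alpha> * (3/5) ^ n + \<beta> * (1/5) ^ n)) = (\<lambda>n. \<beta> * (2/5) ^ n + \<alpha> * (6/5) ^ n)"
    by (simp add: fun_eq_iff field_simps flip: power_mult_distrib)
  moreover have "(\<lambda>n. \<beta> * (2/5::real) ^ n) \<longlonglongrightarrow> 0"
    by (intro tendsto_mult_right_zero LIMSEQ_realpow_zero) simp_all
  moreover have "filterlim (\<lambda>n. (6/5::real) ^ n) at_top sequentially"
    by real_asymp
  ultimately show ?thesis
    using filterlim_tendsto_add_at_top filterlim_tendsto_pos_mult_at_top[OF tendsto_const assms]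
    by metis
qed

lemma dyadic_bracket:
  fixes h r :: real
  assumes h: "0 < h" "h < r / 2 ^ N"
  shows "\<exists>n\<ge>N. r / 2 ^ Suc n \<le> h \<and> h < r / 2 ^ n"
proof -
  have "0 < r / 2 ^ N"
    using h by linarith
  then have r: "0 < r"
    by (simp add: zero_less_divide_iff)
  obtain k where "(1/2) ^ k < h / r"
    using real_arch_pow_inv[of "h / r" "1/2"] h r by auto
  then have "r / 2 ^ k < h"
    using r by (simp add: power_divide field_simps)
  moreover have "r / 2 ^ (N + k) \<le> r / 2 ^ k"
    using r by (simp add: frac_le)
  ultimately obtain m where "\<not> r / 2 ^ (N + m) \<le> h" "r / 2 ^ (N + Suc m) \<le> h"
    using ex_least_nat_less[of "\<lambda>m. r / 2 ^ (N + m) \<le> h" k] h by auto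
  then show ?thesis
    by (intro exI[of _ "N + m"]) auto
qed

lemma right_quotient_at_top_of_dyadic_growth:
  fixes g :: "real \<Rightarrow> real"
  assumes r: "0 < r" and mono: "mono_on {x..x + r} g"
    and growth: "filterlim (\<lambda>n. 2 ^ n * (g (x + r / 2 ^ n) - g x)) at_top sequentially"
  shows "filterlim (\<lambda>h. (g (x + h) - g x) / h) at_top (at_right 0)"
  unfolding filterlim_at_top_gt[where c = 0]
proof (intro allI impI)
  fix Z :: real
  assume Z: "0 < Z"
  from growth obtain N where N: "\<And>n. N \<le> n \<Longrightarrow> 2 * r * Z \<le> 2 ^ n * (g (x + r / 2 ^ n) - g x)"
    unfolding filterlim_at_top eventually_sequentially by blast
  have "eventually (\<lambda>h. h \<in> {0<..<r / 2 ^ N}) (at_right 0)"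
    by (rule eventually_at_right_real) (simp add: r)
  then show "eventually (\<lambda>h. Z \<le> (g (x + h) - g x) / h) (at_right 0)"
  proof (rule eventually_mono)
    fix h
    assume "h \<in> {0<..<r / 2 ^ N}"
    then have h: "0 < h" "h < r / 2 ^ N"
      by simp_all
    then obtain n where "N \<le> n" and lo: "r / 2 ^ Suc n \<le> h" and hi: "h < r / 2 ^ n"
      using dyadic_bracket by blast
    have "2 * r * Z \<le> 2 ^ Suc n * (g (x + r / 2 ^ Suc n) - g x)"
      by (rule N) (use \<open>N \<le> n\<close> in simp)
    then have "r * Z / 2 ^ n \<le> g (x + r / 2 ^ Suc n) - g x"
      by (simp add: field_simps)
    also have "\<dots> \<le> g (x + h) - g x"
    proof -
      have "r / 2 ^ n \<le> r"
        using r by (simp add: field_simps)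
      then show ?thesis
        using mono_onD[OF mono, of "x + r / 2 ^ Suc n" "x + h"] lo hi r by simp
    qed
    finally have bound: "r * Z / 2 ^ n \<le> g (x + h) - g x" .
    have "h * Z < r / 2 ^ n * Z"
      using hi Z by (rule mult_strict_right_mono)
    with bound have "h * Z \<le> g (x + h) - g x"
      by simp
    then show "Z \<le> (g (x + h) - g x) / h"
      using h by (simp add: pos_le_divide_eq mult.commute)
  qed
qed

lemma left_quotient_at_top_of_dyadic_growth:
  fixes g :: "real \<Rightarrow> real"
  assumes r: "0 < r" and mono: "mono_on {x - r..x} g"
    and growth: "filterlim (\<lambda>n. 2 ^ n * (g x - g (x - r / 2 ^ n))) at_top sequentially"
  shows "filterlim (\<lambda>h. (g (x + h) - g x) / h) at_top (at_left 0)"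
proof -
  have mono': "mono_on {- x..- x + r} (\<lambda>t. - g (- t))"
  proof (rule mono_onI)
    fix a b
    assume "a \<in> {- x..- x + r}" "b \<in> {- x..- x + r}" "a \<le> b"
    then have "g (- b) \<le> g (- a)"
      by (intro mono_onD[OF mono]) auto
    then show "- g (- a) \<le> - g (- b)"
      by simp
  qed
  have "(\<lambda>n. 2 ^ n * (- g (- (- x + r / 2 ^ n)) - - g (- (- x))))
      = (\<lambda>n. 2 ^ n * (g x - g (x - r / 2 ^ n)))"
    by (simp add: fun_eq_iff)
  with growth have growth': "filterlim (\<lambda>n. 2 ^ n * (- g (- (- x + r / 2 ^ n)) - - g (- (- x))))
      at_top sequentially"
    by simp
  have "(\<lambda>h. (- g (- (- x + h)) - - g (- (- x))) / h) = (\<lambda>h. (g (x + - h) - g x) / - h)"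
    by (simp add: fun_eq_iff divide_minus_right minus_divide_left)
  with right_quotient_at_top_of_dyadic_growth[OF r mono' growth']
  show ?thesis
    unfolding filterlim_at_left_to_right minus_zero by simp
qed

lemma quotient_at_top_of_dyadic_growth:
  fixes g :: "real \<Rightarrow> real"
  assumes "0 < r" and "mono_on {x - r..x + r} g"
    and "filterlim (\<lambda>n. 2 ^ n * (g (x + r / 2 ^ n) - g x)) at_top sequentially"
    and "filterlim (\<lambda>n. 2 ^ n * (g x - g (x - r / 2 ^ n))) at_top sequentially"
  shows "filterlim (\<lambda>h. (g (x + h) - g x) / h) at_top (at 0)"
proof (rule filterlim_split_at)
  have "{x - r..x} \<subseteq> {x - r..x + r}" and "{x..x + r} \<subseteq> {x - r..x + r}"
    using \<open>0 < r\<close> by auto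
  then have "mono_on {x - r..x} g" and "mono_on {x..x + r} g"
    using mono_on_subset[OF \<open>mono_on {x - r..x + r} g\<close>] by blast+
  with assms show "filterlim (\<lambda>h. (g (x + h) - g x) / h) at_top (at_left 0)"
    and "filterlim (\<lambda>h. (g (x + h) - g x) / h) at_top (at_right 0)"
    by (simp_all add: left_quotient_at_top_of_dyadic_growth right_quotient_at_top_of_dyadic_growth)
qed

lemma sg_word_Nil [simp]: "sg_word p [] x = x"
  by (simp add: sg_word_def)

lemma sg_word_Cons [simp]: "sg_word p (i # w) x = sg_map p i (sg_word p w x)"
  by (simp add: sg_word_def)

lemma sg_word_append: "sg_word p (w @ v) x = sg_word p w (sg_word p v x)"
  by (simp add: sg_word_def)

lemma sg_word_midpoint: "sg_word p w ((x + y) / 2) = (sg_word p w x + sg_word p w y) / 2"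
  by (induction w) (simp_all add: sg_map_def, simp add: field_simps)

lemma sg_word_replicate: "sg_word p (replicate n j) x = p j + (x - p j) / 2 ^ n"
  by (induction n) (simp_all add: sg_map_def, simp add: field_simps)

lemma sg_word_replicate_fixed: "sg_word p (w @ replicate n j) (p j) = sg_word p w (p j)"
  by (simp add: sg_word_append sg_word_replicate)

lemma sg_edge_midpoint: "sg_edge p f (1/2) = f (sg_word p [2] (p 1))"
  by (simp add: sg_edge_def sg_map_def field_simps)

lemma sg_edge_right_dyadic:
  "sg_edge p f (1/2 + (1/2) / 2 ^ n) = f (sg_word p ([2] @ replicate n 1) (p 2))"
  by (simp add: sg_edge_def sg_word_append sg_word_replicate sg_map_def field_simps)

lemma sg_edge_left_dyadic:
  "sg_edge p f (1/2 - (1/2) / 2 ^ n) = f (sg_word p ([1] @ replicate n 2) (p 1))"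
  by (simp add: sg_edge_def sg_word_append sg_word_replicate sg_map_def field_simps)

lemma sg_harmonic_refine:
  assumes "sg_harmonic p f" and "set w \<subseteq> {0,1,2}" and "{i,j,k} = {0,1,2::nat}"
  shows "f (sg_word p (w @ [j]) (p i)) =
    (2 * f (sg_word p w (p i)) + 2 * f (sg_word p w (p j)) + f (sg_word p w (p k))) / 5"
proof -
  have "sg_word p (w @ [j]) (p i) = (sg_word p w (p i) + sg_word p w (p j)) / 2"
    by (simp add: sg_word_append flip: sg_word_midpoint) (simp add: sg_map_def add.commute)
  then show ?thesis
    using assms unfolding sg_harmonic_def by metis
qed

lemma sg_harmonic_uminus: "sg_harmonic p f \<Longrightarrow> sg_harmonic p (\<lambda>z. - f z)"
  unfolding sg_harmonic_def by (auto intro: continuous_on_minus simp: field_simps)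

lemma sg_harmonic_cell_iterate:
  assumes h: "sg_harmonic p f" and w: "set w \<subseteq> {0,1,2}" and ijk: "{i,j,k} = {0,1,2::nat}"
  defines "c \<equiv> f (sg_word p w (p j))"
  shows "f (sg_word p (w @ replicate n j) (p i)) - c =
    ((f (sg_word p w (p i)) - c + (f (sg_word p w (p k)) - c)) * (3/5) ^ n
      + (f (sg_word p w (p i)) - f (sg_word p w (p k))) * (1/5) ^ n) / 2"
proof -
  have j: "j \<in> {0,1,2}"
    using ijk by blast
  have step: "f (sg_word p (w @ replicate (Suc n) j) (p i')) - c =
      (2 * (f (sg_word p (w @ replicate n j) (p i')) - c)
        + (f (sg_word p (w @ replicate n j) (p k')) - c)) / 5"
    if "{i',j,k'} = {0,1,2::nat}" for i' k' n
  proof -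
    have "set (w @ replicate n j) \<subseteq> {0,1,2}"
      using w j by auto
    from sg_harmonic_refine[OF h this that] show ?thesis
      by (simp add: c_def sg_word_replicate_fixed field_simps flip: replicate_append_same)
  qed
  have kji: "{k,j,i} = {0,1,2::nat}"
    using ijk by (simp add: insert_commute)
  show ?thesis
    using coupled_recurrence_closed_form[where X = "\<lambda>n. f (sg_word p (w @ replicate n j) (p i)) - c"
        and Y = "\<lambda>n. f (sg_word p (w @ replicate n j) (p k)) - c", OF step[OF ijk] step[OF kji]]
    by simp
qed

lemma sg_harmonic_edge_right_increment:
  assumes h: "sg_harmonic p f"
  shows "sg_edge p f (1/2 + (1/2) / 2 ^ n) - sg_edge p f (1/2) =
    3 * (f (p 2) - f (p 1)) / 10 * (3/5) ^ n + (3 * f (p 2) - 2 * f (p 0) - f (p 1)) / 10 * (1/5) ^ n"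
proof -
  let ?m = "f (sg_word p [2] (p 1))" and ?v = "f (sg_word p [2] (p 0))"
  have m: "?m = (2 * f (p 1) + 2 * f (p 2) + f (p 0)) / 5"
    using sg_harmonic_refine[OF h, of "[]" 1 2 0] by (simp add: insert_commute)
  have v: "?v = (2 * f (p 0) + 2 * f (p 2) + f (p 1)) / 5"
    using sg_harmonic_refine[OF h, of "[]" 0 2 1] by (simp add: insert_commute)
  have "f (sg_word p ([2] @ replicate n 1) (p 2)) - ?m =
      ((f (p 2) - ?m + (?v - ?m)) * (3/5) ^ n + (f (p 2) - ?v) * (1/5) ^ n) / 2"
    using sg_harmonic_cell_iterate[OF h, of "[2]" 2 1 0 n]
    by (simp add: insert_commute sg_map_def)
  then show ?thesis
    unfolding sg_edge_right_dyadic sg_edge_midpoint m v by (simp add: field_simps)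
qed

lemma sg_harmonic_edge_left_increment:
  assumes h: "sg_harmonic p f"
  shows "sg_edge p f (1/2) - sg_edge p f (1/2 - (1/2) / 2 ^ n) =
    3 * (f (p 2) - f (p 1)) / 10 * (3/5) ^ n + (2 * f (p 0) + f (p 2) - 3 * f (p 1)) / 10 * (1/5) ^ n"
proof -
  let ?m = "f (sg_word p [2] (p 1))" and ?v = "f (sg_word p [1] (p 0))"
  have m: "?m = (2 * f (p 1) + 2 * f (p 2) + f (p 0)) / 5"
    using sg_harmonic_refine[OF h, of "[]" 1 2 0] by (simp add: insert_commute)
  have v: "?v = (2 * f (p 0) + 2 * f (p 1) + f (p 2)) / 5"
    using sg_harmonic_refine[OF h, of "[]" 0 1 2] by (simp add: insert_commute)
  have same_midpoint: "sg_word p [1] (p 2) = sg_word p [2] (p 1)"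
    by (simp add: sg_map_def add.commute)
  have "f (sg_word p ([1] @ replicate n 2) (p 1)) - ?m =
      ((f (p 1) - ?m + (?v - ?m)) * (3/5) ^ n + (f (p 1) - ?v) * (1/5) ^ n) / 2"
    using sg_harmonic_cell_iterate[OF h, of "[1]" 1 2 0 n]
    unfolding same_midpoint by (simp add: insert_commute sg_map_def)
  then show ?thesis
    unfolding sg_edge_left_dyadic sg_edge_midpoint m v by (simp add: field_simps)
qed

lemma sg_harmonic_edge_quotient_at_top:
  assumes h: "sg_harmonic p f" and mono: "mono_on {0..1} (sg_edge p f)"
    and ends: "sg_edge p f 0 < sg_edge p f 1"
  shows "filterlim (\<lambda>h. (sg_edge p f (1/2 + h) - sg_edge p f (1/2)) / h) at_top (at 0)"
proof (rule quotient_at_top_of_dyadic_growth)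
  have \<alpha>: "0 < 3 * (f (p 2) - f (p 1)) / 10"
    using ends by (simp add: sg_edge_def)
  show "filterlim (\<lambda>n. 2 ^ n * (sg_edge p f (1/2 + (1/2) / 2 ^ n) - sg_edge p f (1/2)))
      at_top sequentially"
    unfolding sg_harmonic_edge_right_increment[OF h] by (rule dyadic_power_growth[OF \<alpha>])
  show "filterlim (\<lambda>n. 2 ^ n * (sg_edge p f (1/2) - sg_edge p f (1/2 - (1/2) / 2 ^ n)))
      at_top sequentially"
    unfolding sg_harmonic_edge_left_increment[OF h] by (rule dyadic_power_growth[OF \<alpha>])
qed (use mono in simp_all)

theorem lemma4:
  fixes p :: "nat \<Rightarrow> complex" and f :: "complex \<Rightarrow> real"
  assumes "dist (p 0) (p 1) = 1" and "dist (p 1) (p 2) = 1" and "dist (p 0) (p 2) = 1"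
    and "sg_harmonic p f"
  shows "(strict_mono_on {0..1} (sg_edge p f) \<longrightarrow>
            filterlim (\<lambda>h. (sg_edge p f (1/2 + h) - sg_edge p f (1/2)) / h) at_top (at 0))
       \<and> ((\<forall>s\<in>{0..1}. \<forall>t\<in>{0..1}. s < t \<longrightarrow> sg_edge p f t < sg_edge p f s) \<longrightarrow>
            filterlim (\<lambda>h. (sg_edge p f (1/2 + h) - sg_edge p f (1/2)) / h) at_bot (at 0))"
proof (intro conjI impI)
  assume "strict_mono_on {0..1} (sg_edge p f)"
  then show "filterlim (\<lambda>h. (sg_edge p f (1/2 + h) - sg_edge p f (1/2)) / h) at_top (at 0)"
    by (intro sg_harmonic_edge_quotient_at_top[OF assms(4)])
      (auto simp: strict_mono_on_imp_mono_on strict_mono_onD)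
next
  assume dec: "\<forall>s\<in>{0..1}. \<forall>t\<in>{0..1}. s < t \<longrightarrow> sg_edge p f t < sg_edge p f s"
  have neg: "sg_edge p (\<lambda>z. - f z) = (\<lambda>t. - sg_edge p f t)"
    by (simp add: sg_edge_def fun_eq_iff)
  have "strict_mono_on {0..1} (sg_edge p (\<lambda>z. - f z))"
    unfolding neg using dec by (auto intro!: strict_mono_onI)
  then have "filterlim (\<lambda>h. (sg_edge p (\<lambda>z. - f z) (1/2 + h) - sg_edge p (\<lambda>z. - f z) (1/2)) / h)
      at_top (at 0)"
    by (intro sg_harmonic_edge_quotient_at_top[OF sg_harmonic_uminus[OF assms(4)]])
      (auto simp: strict_mono_on_imp_mono_on strict_mono_onD)
  then show "filterlim (\<lambda>h. (sg_edge p f (1/2 + h) - sg_edge p f (1/2)) / h) at_bot (at 0)"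
    unfolding neg by (simp add: filterlim_uminus_at_bot minus_divide_left)
qed

end
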